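(* Let $E$ be a second countable Stone space with at least four points. Then $E$ admits a pants decomposition.
   Context: A Stone space is a compact, Hausdorff, totally disconnected space. A cut of $E$ is an unordered partition of $E$ into two disjoint clopen sets $U,V$, written $U\sqcup V$; it is non-peripheral if each of $U,V$ contains at least two points. Two cuts $U\sqcup V$, $U'\sqcup V'$ cross if all four sets $U\cap U'$, $U\cap V'$, $V\cap U'$, $V\cap V'$ are nonempty; otherwise they are compatible. A pants decomposition of $E$ is a countable (finite or countably infinite) collection $\Gamma=\{\gamma_n\}$ of non-peripheral cuts such that: (1) any two cuts in $\Gamma$ are compatible; (2) every non-peripheral cut $\gamma\notin\Gamma$ crosses some cut of $\Gamma$; (3) for every non-peripheral cut $\gamma\notin\Gamma$, the set of $\gamma_j\in\Gamma$ crossing $\gamma$ is finite. *)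

theory Defs
  imports "HOL-Analysis.Analysis"
begin

definition totally_disconnected_space :: "'a topology \<Rightarrow> bool" where
  "totally_disconnected_space X \<longleftrightarrow>
     (\<forall>S. connectedin X S \<longrightarrow> (\<forall>x\<in>S. \<forall>y\<in>S. x = y))"

definition stone_space :: "'a topology \<Rightarrow> bool" where
  "stone_space X \<longleftrightarrow> compact_space X \<and> Hausdorff_space X \<and> totally_disconnected_space X"

definition is_cut :: "'a topology \<Rightarrow> 'a set set \<Rightarrow> bool" where
  "is_cut X c \<longleftrightarrow> (\<exists>U V. c = {U, V} \<and> closedin X U \<and> openin X U \<and> closedin X V \<and> openin X V
      \<and> U \<inter> V = {} \<and> U \<union> V = topspace X \<and> U \<noteq> {} \<and> V \<noteq> {})"

definition non_peripheral_cut :: "'a topology \<Rightarrow> 'a set set \<Rightarrow> bool" where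
  "non_peripheral_cut X c \<longleftrightarrow> is_cut X c \<and> (\<forall>U\<in>c. \<exists>x\<in>U. \<exists>y\<in>U. x \<noteq> y)"

definition cuts_cross :: "'a set set \<Rightarrow> 'a set set \<Rightarrow> bool" where
  "cuts_cross c d \<longleftrightarrow> (\<forall>U\<in>c. \<forall>U'\<in>d. U \<inter> U' \<noteq> {})"

definition cuts_compatible :: "'a set set \<Rightarrow> 'a set set \<Rightarrow> bool" where
  "cuts_compatible c d \<longleftrightarrow> \<not> cuts_cross c d"

definition pants_decomposition :: "'a topology \<Rightarrow> 'a set set set \<Rightarrow> bool" where
  "pants_decomposition X \<Gamma> \<longleftrightarrow>
     countable \<Gamma> \<and> (\<forall>c\<in>\<Gamma>. non_peripheral_cut X c) \<and>
     (\<forall>c\<in>\<Gamma>. \<forall>d\<in>\<Gamma>. cuts_compatible c d) \<and>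
     (\<forall>g. non_peripheral_cut X g \<and> g \<notin> \<Gamma> \<longrightarrow> (\<exists>c\<in>\<Gamma>. cuts_cross g c)) \<and>
     (\<forall>g. non_peripheral_cut X g \<and> g \<notin> \<Gamma> \<longrightarrow> finite {c\<in>\<Gamma>. cuts_cross g c})"

end

theory Submission
  imports Defs
begin

text \<open>Enumerate the (countably many) clopen sets as \<open>A 0, A 1, \<dots>\<close> and let the cells of depth \<open>n\<close>
  be the atoms of the Boolean algebra generated by \<open>A 0, \<dots>, A (n - 1)\<close>. The cells form a binary tree
  of clopen sets, so the non-peripheral cuts \<open>{C, E - C}\<close> cut off by cells are pairwise compatible.
  A non-peripheral cut \<open>{A k, E - A k}\<close> can only be crossed by cells of depth at most \<open>k\<close>, since
  deeper cells lie inside \<open>A k\<close> or outside it. If no cell crosses it, follow from the root the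
  cells containing one side of the cut: non-crossing forces a child to contain a side again unless
  the cell is itself a side, and at depth \<open>k + 1\<close> a cell containing a side must equal it.\<close>

lemma countable_clopens:
  assumes "compact_space X" "second_countable X"
  shows "countable {U. closedin X U \<and> openin X U}"
proof -
  obtain \<B> where \<B>: "countable \<B>" "\<forall>V\<in>\<B>. openin X V"
    "\<forall>U x. openin X U \<and> x \<in> U \<longrightarrow> (\<exists>V\<in>\<B>. x \<in> V \<and> V \<subseteq> U)"
    using assms(2) unfolding second_countable_def by blast
  have "U \<in> Union ` {\<F>. finite \<F> \<and> \<F> \<subseteq> \<B>}" if "closedin X U" "openin X U" for U
  proof -
    have "compactin X U"
      using closedin_compact_space assms(1) that(1) by blast
    moreover have "U \<subseteq> \<Union>{V\<in>\<B>. V \<subseteq> U}" "\<forall>V\<in>{V\<in>\<B>. V \<subseteq> U}. openin X V"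
      using \<B>(2,3) that(2) by blast+
    ultimately obtain \<F> where "finite \<F>" "\<F> \<subseteq> {V\<in>\<B>. V \<subseteq> U}" "U \<subseteq> \<Union>\<F>"
      unfolding compactin_def by (elim conjE allE[of _ "{V\<in>\<B>. V \<subseteq> U}"]) blast
    then show ?thesis
      by (intro image_eqI[of _ _ \<F>]) auto
  qed
  then have "{U. closedin X U \<and> openin X U} \<subseteq> Union ` {\<F>. finite \<F> \<and> \<F> \<subseteq> \<B>}"
    by blast
  then show ?thesis
    by (rule countable_subset) (intro countable_image countable_Collect_finite_subset \<B>(1))
qed

lemma cut_eq_complement_pair:
  assumes "is_cut X c"
  obtains U where "closedin X U" "openin X U" "c = {U, topspace X - U}"
proof -
  obtain U V where "c = {U, V}" "closedin X U" "openin X U" "U \<inter> V = {}" "U \<union> V = topspace X"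
    using assms unfolding is_cut_def by blast
  moreover have "V = topspace X - U"
    using calculation by blast
  ultimately show thesis
    using that by blast
qed

lemma is_cut_complement_pair:
  assumes "closedin X U" "openin X U" "U \<noteq> {}" "topspace X - U \<noteq> {}"
  shows "is_cut X {U, topspace X - U}"
proof -
  have "closedin X (topspace X - U)" "openin X (topspace X - U)"
    using assms(1,2) by (simp_all add: closedin_diff openin_diff)
  moreover have "U \<union> (topspace X - U) = topspace X"
    using openin_subset[OF assms(2)] by blast
  ultimately show ?thesis
    unfolding is_cut_def using assms by (intro exI[of _ U] exI[of _ "topspace X - U"]) simp
qed

lemma cuts_cross_pair_iff:
  "cuts_cross {B, B'} {C, C'} \<longleftrightarrow> B \<inter> C \<noteq> {} \<and> B \<inter> C' \<noteq> {} \<and> B' \<inter> C \<noteq> {} \<and> B' \<inter> C' \<noteq> {}"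
  by (auto simp: cuts_cross_def)

lemma cuts_cross_complement_pairs_iff:
  assumes "B \<subseteq> E" "C \<subseteq> E"
  shows "cuts_cross {B, E - B} {C, E - C} \<longleftrightarrow>
    B \<inter> C \<noteq> {} \<and> \<not> B \<subseteq> C \<and> \<not> C \<subseteq> B \<and> \<not> E \<subseteq> B \<union> C"
  using assms unfolding cuts_cross_pair_iff by auto

lemma crossing_cut_parts_nontrivial:
  assumes "cuts_cross {B, B'} d" "B \<inter> B' = {}" "U \<in> d"
  shows "\<exists>x\<in>U. \<exists>y\<in>U. x \<noteq> y"
proof -
  have "U \<inter> B \<noteq> {}" "U \<inter> B' \<noteq> {}"
    using assms(1,3) by (auto simp: cuts_cross_def)
  then obtain x y where "x \<in> U \<inter> B" "y \<in> U \<inter> B'"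
    by blast
  moreover have "x \<noteq> y"
    using calculation assms(2) by auto
  ultimately show ?thesis
    by blast
qed

lemma non_peripheral_if_crosses:
  assumes "closedin X C" "openin X C" "cuts_cross {B, B'} {C, topspace X - C}" "B \<inter> B' = {}"
  shows "non_peripheral_cut X {C, topspace X - C}"
  unfolding non_peripheral_cut_def
proof
  show "is_cut X {C, topspace X - C}"
    using assms(1-3) by (intro is_cut_complement_pair) (auto simp: cuts_cross_pair_iff)
  show "\<forall>U\<in>{C, topspace X - C}. \<exists>x\<in>U. \<exists>y\<in>U. x \<noteq> y"
    using crossing_cut_parts_nontrivial[OF assms(3,4)] by simp
qed

definition cell :: "'a set \<Rightarrow> (nat \<Rightarrow> 'a set) \<Rightarrow> bool list \<Rightarrow> 'a set" where
  "cell E A s = {x \<in> E. \<forall>i<length s. x \<in> A i \<longleftrightarrow> s ! i}"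

lemma cell_subset: "cell E A s \<subseteq> E"
  unfolding cell_def by auto

lemma cell_Nil [simp]: "cell E A [] = E"
  unfolding cell_def by auto

lemma cell_snoc:
  "cell E A (s @ [b]) = cell E A s \<inter> (if b then A (length s) else E - A (length s))"
  unfolding cell_def by (auto simp: nth_append less_Suc_eq)

lemma cell_children: "cell E A s = cell E A (s @ [True]) \<union> cell E A (s @ [False])"
  using cell_subset[of E A s] unfolding cell_snoc by auto

lemma cell_extension_subset:
  assumes "length s \<le> length t" "\<forall>i<length s. s ! i = t ! i"
  shows "cell E A t \<subseteq> cell E A s"
  using assms unfolding cell_def by fastforce

lemma cells_laminar:
  "cell E A s \<subseteq> cell E A t \<or> cell E A t \<subseteq> cell E A s \<or> cell E A s \<inter> cell E A t = {}"
proof (cases "\<forall>i<min (length s) (length t). s ! i = t ! i")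
  case True
  then show ?thesis
    using cell_extension_subset[of s t] cell_extension_subset[of t s] by fastforce
next
  case False
  then obtain i where "i < length s" "i < length t" "s ! i \<noteq> t ! i"
    by auto
  then show ?thesis
    unfolding cell_def by auto
qed

lemma deep_cell_decides:
  "k < length s \<Longrightarrow> cell E A s \<subseteq> A k \<or> cell E A s \<inter> A k = {}"
  unfolding cell_def by auto

lemma cell_clopen:
  assumes "\<And>i. closedin X (A i) \<and> openin X (A i)"
  shows "closedin X (cell (topspace X) A s) \<and> openin X (cell (topspace X) A s)"
proof (induction s rule: rev_induct)
  case Nil
  then show ?case by simp
next
  case (snoc b s)
  then show ?case
    using assms[of "length s"] by (auto simp: cell_snoc)
qed

text \<open>Here \<open>T\<^sub>1, T\<^sub>2\<close> are the children of a cell containing the side \<open>S\<close> of a cut with other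
  side \<open>S'\<close>, and the last assumption is non-crossing.\<close>

lemma child_contains_side:
  assumes "S \<subseteq> T\<^sub>1 \<union> T\<^sub>2" "S \<noteq> {}" "T\<^sub>1 \<union> T\<^sub>2 \<noteq> S"
    and "\<And>T. T \<in> {T\<^sub>1, T\<^sub>2} \<Longrightarrow> T \<inter> S = {} \<or> S \<subseteq> T \<or> T \<subseteq> S \<or> S' \<subseteq> T"
  shows "\<exists>T\<in>{T\<^sub>1, T\<^sub>2}. S \<subseteq> T \<or> S' \<subseteq> T"
proof (rule ccontr)
  assume none: "\<not> ?thesis"
  have "T\<^sub>1 \<inter> S = {} \<or> T\<^sub>1 \<subseteq> S" "T\<^sub>2 \<inter> S = {} \<or> T\<^sub>2 \<subseteq> S"
    using assms(4)[of T\<^sub>1] assms(4)[of T\<^sub>2] none by simp_all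
  moreover have "\<not> S \<subseteq> T\<^sub>1" "\<not> S \<subseteq> T\<^sub>2"
    using none by simp_all
  ultimately show False
    using assms(1-3) by auto
qed

lemma uncrossed_cell_step:
  assumes "B \<subseteq> E" "B \<noteq> {}" "E - B \<noteq> {}"
    and uncrossed: "\<And>b. \<not> cuts_cross {B, E - B} {cell E A (s @ [b]), E - cell E A (s @ [b])}"
    and side: "S \<in> {B, E - B}" "S \<subseteq> cell E A s" "cell E A s \<noteq> S"
  shows "\<exists>b. \<exists>S'\<in>{B, E - B}. S' \<subseteq> cell E A (s @ [b])"
proof -
  let ?C = "\<lambda>b. cell E A (s @ [b])"
  from side(1) consider "S = B" | "S = E - B"
    by blast
  then have sides: "{S, E - S} = {B, E - B}"
    using assms(1) by cases (auto simp: double_diff insert_commute)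
  have S: "S \<subseteq> E" "S \<noteq> {}"
    using assms(1-3) side(1) by auto
  have nested: "T \<inter> S = {} \<or> S \<subseteq> T \<or> T \<subseteq> S \<or> E - S \<subseteq> T"
    if child: "T \<in> {?C True, ?C False}" for T
  proof -
    obtain b where T: "T = ?C b"
      using child by blast
    have "\<not> cuts_cross {S, E - S} {T, E - T}"
      using uncrossed[of b] unfolding sides T .
    then show ?thesis
      using cuts_cross_complement_pairs_iff[OF S(1) cell_subset, of A "s @ [b]"] unfolding T
      by auto
  qed
  have "\<exists>T\<in>{?C True, ?C False}. S \<subseteq> T \<or> E - S \<subseteq> T"
  proof (rule child_contains_side)
    show "S \<subseteq> ?C True \<union> ?C False" "?C True \<union> ?C False \<noteq> S"
      using side(2,3) cell_children[of E A s] by simp_all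
  qed (use S(2) nested in auto)
  then show ?thesis
    using sides by blast
qed

lemma uncrossed_cut_is_cell:
  assumes "A k \<subseteq> E" "A k \<noteq> {}" "E - A k \<noteq> {}"
    and uncrossed: "\<And>s. \<not> cuts_cross {A k, E - A k} {cell E A s, E - cell E A s}"
  shows "\<exists>s. cell E A s \<in> {A k, E - A k}"
proof (rule ccontr)
  assume no_side: "\<nexists>s. cell E A s \<in> {A k, E - A k}"
  have "\<exists>s. length s = n \<and> (\<exists>S\<in>{A k, E - A k}. S \<subseteq> cell E A s)" for n
  proof (induction n)
    case 0
    then show ?case by simp
  next
    case (Suc n)
    then obtain s S where s: "length s = n" "S \<in> {A k, E - A k}" "S \<subseteq> cell E A s"
      by blast
    moreover have "cell E A s \<noteq> S"
      using no_side s(2) by auto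
    ultimately have "\<exists>b. \<exists>S'\<in>{A k, E - A k}. S' \<subseteq> cell E A (s @ [b])"
      using uncrossed_cell_step[OF assms(1-3) uncrossed] by simp
    then obtain b where "\<exists>S'\<in>{A k, E - A k}. S' \<subseteq> cell E A (s @ [b])"
      by blast
    then show ?case
      using s(1) by (intro exI[of _ "s @ [b]"]) simp
  qed
  then obtain s S where s: "length s = Suc k" "S \<in> {A k, E - A k}" "S \<subseteq> cell E A s"
    by blast
  have "cell E A s \<subseteq> A k \<or> cell E A s \<inter> A k = {}"
    by (rule deep_cell_decides) (simp add: s(1))
  then have "cell E A s \<in> {A k, E - A k}"
    using s(2,3) assms(2,3) cell_subset[of E A s] by auto
  then show False
    using no_side by blast
qed

lemma pants_decomposition_from_clopen_enumeration:
  assumes enum: "range A = {U. closedin X U \<and> openin X U}"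
  defines "\<Gamma> \<equiv> {c. \<exists>s. c = {cell (topspace X) A s, topspace X - cell (topspace X) A s}
                       \<and> non_peripheral_cut X c}"
  shows "pants_decomposition X \<Gamma>"
proof -
  let ?E = "topspace X"
  let ?cut = "\<lambda>s. {cell ?E A s, ?E - cell ?E A s}"
  have clopen: "closedin X (A i) \<and> openin X (A i)" for i
    using enum rangeI[of A i] by simp
  have clopen_cells: "closedin X (cell ?E A s)" "openin X (cell ?E A s)" for s
    using cell_clopen[OF clopen] by simp_all
  have enumerated: "\<exists>k. g = {A k, ?E - A k}" if g: "non_peripheral_cut X g" for g
  proof -
    have "is_cut X g"
      using g unfolding non_peripheral_cut_def by simp
    then obtain U where U: "closedin X U" "openin X U" "g = {U, ?E - U}"
      by (rule cut_eq_complement_pair)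
    then have "U \<in> range A"
      using enum by simp
    then show ?thesis
      using U(3) by blast
  qed
  have "countable \<Gamma>"
  proof (rule countable_subset)
    show "\<Gamma> \<subseteq> range ?cut"
      unfolding \<Gamma>_def by blast
  qed simp
  moreover have "cuts_compatible c d" if cd: "c \<in> \<Gamma>" "d \<in> \<Gamma>" for c d
  proof -
    obtain s t where "c = ?cut s" "d = ?cut t"
      using cd unfolding \<Gamma>_def by blast
    then show ?thesis
      using cells_laminar[of ?E A s t]
      by (auto simp: cuts_compatible_def cuts_cross_complement_pairs_iff[OF cell_subset cell_subset])
  qed
  moreover have "\<exists>c\<in>\<Gamma>. cuts_cross g c" if g: "non_peripheral_cut X g" "g \<notin> \<Gamma>" for g
  proof (rule ccontr)
    assume uncrossed_by_\<Gamma>: "\<not> (\<exists>c\<in>\<Gamma>. cuts_cross g c)"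
    obtain k where k: "g = {A k, ?E - A k}"
      using enumerated g(1) by blast
    have "\<not> cuts_cross {A k, ?E - A k} (?cut s)" for s
    proof
      assume "cuts_cross {A k, ?E - A k} (?cut s)"
      moreover from this have "?cut s \<in> \<Gamma>"
        unfolding \<Gamma>_def using non_peripheral_if_crosses[OF clopen_cells] by blast
      ultimately show False
        using uncrossed_by_\<Gamma> k by blast
    qed
    moreover have "A k \<subseteq> ?E" "A k \<noteq> {}" "?E - A k \<noteq> {}"
      using g(1) clopen[of k] openin_subset unfolding k non_peripheral_cut_def by auto
    ultimately obtain s where "cell ?E A s \<in> {A k, ?E - A k}"
      using uncrossed_cut_is_cell by metis
    then have "g = ?cut s"
      using k \<open>A k \<subseteq> ?E\<close> by (auto simp: double_diff insert_commute)
    then show False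
      using g unfolding \<Gamma>_def by blast
  qed
  moreover have "finite {c\<in>\<Gamma>. cuts_cross g c}" if g: "non_peripheral_cut X g" for g
  proof -
    obtain k where k: "g = {A k, ?E - A k}"
      using enumerated g by blast
    have "\<not> cuts_cross g (?cut s)" if "k < length s" for s
      using deep_cell_decides[OF that, of ?E A] cell_subset[of ?E A s]
      unfolding k cuts_cross_pair_iff by blast
    then have "{c\<in>\<Gamma>. cuts_cross g c} \<subseteq> ?cut ` {s. set s \<subseteq> UNIV \<and> length s \<le> k}"
      unfolding \<Gamma>_def by (auto simp: not_less[symmetric])
    moreover have "finite {s :: bool list. set s \<subseteq> UNIV \<and> length s \<le> k}"
      by (rule finite_lists_length_le) simp
    ultimately show ?thesis
      by (rule finite_subset[OF _ finite_imageI])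
  qed
  moreover have "\<forall>c\<in>\<Gamma>. non_peripheral_cut X c"
    unfolding \<Gamma>_def by blast
  ultimately show ?thesis
    unfolding pants_decomposition_def by blast
qed

theorem mainTheorem5:
  fixes X :: "'a topology"
  assumes "stone_space X"
    and "second_countable X"
    and "\<exists>F. F \<subseteq> topspace X \<and> finite F \<and> card F \<ge> 4"
  shows "\<exists>\<Gamma>. pants_decomposition X \<Gamma>"
proof -
  let ?CL = "{U. closedin X U \<and> openin X U}"
  have "countable ?CL"
    using countable_clopens assms(1,2) unfolding stone_space_def by blast
  moreover have "?CL \<noteq> {}"
    by auto
  ultimately have "range (from_nat_into ?CL) = ?CL"
    by simp
  then show ?thesis
    using pants_decomposition_from_clopen_enumeration by blast
qed

end
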